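(* For $n\geq 3$, $$b(n)=2+n+\sum_{k=2}^{n}\binom{n}{k}\, b_{-}(k).$$ Furthermore, $b_{-}(2)=2$, and for all $k\geq 3$, $$b_{-}(k)=b_{-}^{-}(k)+2+\sum_{i=2}^{k-1}\binom{k}{i}\, b_{-}(i).$$
   Context: For $n\in\mathbb{N}$, the Boolean lattice $B(n)$ is the set of binary words of length $n$ ordered coordinatewise (i.e. $B(n)=\mathbf{2}^n$ with $\mathbf{2}$ the chain $0<1$). For $0\leq \ell\leq n$, the level $L_\ell(n)$ is the set of words with exactly $\ell$ ones. For $n\geq 2$, $B_{-}(n):=\bigcup_{i=2}^n L_i(n)$ and $B^{-}(n):=\bigcup_{i=0}^{n-2}L_i(n)$, and for $n\geq 3$, $B_{-}^{-}(n):=\bigcup_{i=2}^{n-2}L_i(n)$, each with the induced order. For a finite poset $P$, $d(P)$ is the number of down-sets of $P$ (subsets closed under going down, including the empty set). Set $b(n):=d(B(n))$ (the $n$-th Dedekind number), $b_{-}(n):=d(B_{-}(n))$, $b_{-}^{-}(n):=d(B_{-}^{-}(n))$. *)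

theory Defs
  imports Main
begin

(* A binary word w of length n is encoded by the set of positions i < n where w has a 1.
   The coordinatewise order on words corresponds to set inclusion. *)
definition boolean_lattice :: "nat \<Rightarrow> nat set set" where
  "boolean_lattice n = Pow {..<n}"

definition level :: "nat \<Rightarrow> nat \<Rightarrow> nat set set" where
  "level l n = {w \<in> boolean_lattice n. card w = l}"

definition B_lower :: "nat \<Rightarrow> nat set set" where
  "B_lower n = (\<Union>i\<in>{2..n}. level i n)"

definition B_lower_upper :: "nat \<Rightarrow> nat set set" where
  "B_lower_upper n = (\<Union>i\<in>{2..n-2}. level i n)"

(* down-sets of the subposet P (order = inclusion), including the empty set *)
definition down_sets :: "nat set set \<Rightarrow> nat set set set" where
  "down_sets P = {D. D \<subseteq> P \<and> (\<forall>x\<in>D. \<forall>y\<in>P. y \<subseteq> x \<longrightarrow> y \<in> D)}"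

definition num_down_sets :: "nat set set \<Rightarrow> nat" where
  "num_down_sets P = card (down_sets P)"

definition b :: "nat \<Rightarrow> nat" where
  "b n = num_down_sets (boolean_lattice n)"

definition b_lower :: "nat \<Rightarrow> nat" where
  "b_lower n = num_down_sets (B_lower n)"

definition b_lower_upper :: "nat \<Rightarrow> nat" where
  "b_lower_upper n = num_down_sets (B_lower_upper n)"

end

theory Submission
  imports Defs
begin

text \<open>
  Group the down-sets \<open>D\<close> of \<open>B(n) = Pow N\<close> by their set of atoms \<open>S = {i. {i} \<in> D}\<close>.
  Then \<open>D \<subseteq> Pow S\<close>; for \<open>S = {}\<close> there are the two down-sets \<open>{}\<close> and \<open>{{}}\<close>, and for
  \<open>S \<noteq> {}\<close> the part of \<open>D\<close> above level 1 is an arbitrary down-set of levels \<open>2..|S|\<close> of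
  \<open>Pow S\<close>, so there are \<open>b_lower |S|\<close> of them (and \<open>b_lower 1 = 1\<close>). Summing over \<open>S\<close>
  gives the formula for \<open>b n\<close>.

  The duality \<open>D \<mapsto> {N - x | x. x \<notin> D}\<close> exchanges the down-sets missing an atom with those
  containing a coatom \<open>N - {j}\<close>. Down-sets containing all atoms but no coatom are down-sets
  of \<open>B_lower_upper n\<close> (again above level 1), and those containing a coatom but missing an
  atom are exactly the \<open>n\<close> sets \<open>Pow (N - {j})\<close>. Counting gives
  \<open>b n + b_lower_upper n = 2 * b_lower n + n\<close>, which together with the first formula is
  the recursion for \<open>b_lower\<close>.
\<close>

lemma down_setsI:
  assumes "D \<subseteq> P" and "\<And>x y. x \<in> D \<Longrightarrow> y \<in> P \<Longrightarrow> y \<subseteq> x \<Longrightarrow> y \<in> D"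
  shows "D \<in> down_sets P"
  using assms unfolding down_sets_def by blast

lemma down_sets_subset: "D \<in> down_sets P \<Longrightarrow> D \<subseteq> P"
  unfolding down_sets_def by blast

lemma down_setsD: "D \<in> down_sets P \<Longrightarrow> x \<in> D \<Longrightarrow> y \<in> P \<Longrightarrow> y \<subseteq> x \<Longrightarrow> y \<in> D"
  unfolding down_sets_def by blast

lemma finite_down_sets: "finite P \<Longrightarrow> finite (down_sets P)"
  by (rule finite_subset[of _ "Pow P"]) (auto dest: down_sets_subset)

lemma down_sets_Int:
  assumes "D \<in> down_sets P" and "L \<subseteq> P"
  shows "D \<inter> L \<in> down_sets L"
  by (rule down_setsI) (use assms in \<open>auto intro: down_setsD\<close>)

lemma down_sets_image:
  assumes inj: "inj_on f (\<Union>P)"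
  shows "down_sets ((`) f ` P) = (`) ((`) f) ` down_sets P"
proof -
  have mono_iff: "f ` y \<subseteq> f ` x \<longleftrightarrow> y \<subseteq> x" if "x \<in> P" "y \<in> P" for x y
  proof -
    have "inj_on f (x \<union> y)"
      using inj by (rule inj_on_subset) (use that in auto)
    then show ?thesis
      unfolding inj_on_def by blast
  qed
  show ?thesis
  proof (intro equalityI subsetI)
    fix E assume E: "E \<in> down_sets ((`) f ` P)"
    have "{x \<in> P. f ` x \<in> E} \<in> down_sets P"
    proof (rule down_setsI)
      show "y \<in> {x \<in> P. f ` x \<in> E}" if "x \<in> {x \<in> P. f ` x \<in> E}" "y \<in> P" "y \<subseteq> x" for x y
        using down_setsD[OF E, of "f ` x" "f ` y"] that by auto
    qed auto
    moreover have "E = (`) f ` {x \<in> P. f ` x \<in> E}"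
      using down_sets_subset[OF E] by auto
    ultimately show "E \<in> (`) ((`) f) ` down_sets P"
      by blast
  next
    fix E assume "E \<in> (`) ((`) f) ` down_sets P"
    then obtain D where D: "D \<in> down_sets P" and E: "E = (`) f ` D"
      by blast
    show "E \<in> down_sets ((`) f ` P)"
    proof (rule down_setsI)
      show "E \<subseteq> (`) f ` P"
        using down_sets_subset[OF D] E by blast
      fix x' y' assume "x' \<in> E" "y' \<in> (`) f ` P" "y' \<subseteq> x'"
      then obtain x y where "x \<in> D" "x' = f ` x" "y \<in> P" "y' = f ` y"
        using E by blast
      moreover have "y \<subseteq> x"
        using mono_iff[of x y] down_sets_subset[OF D] \<open>y' \<subseteq> x'\<close> calculation by blast
      ultimately show "y' \<in> E"
        using down_setsD[OF D] E by blast
    qed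
  qed
qed

lemma card_down_sets_image:
  assumes "inj_on f (\<Union>P)"
  shows "card (down_sets ((`) f ` P)) = card (down_sets P)"
proof -
  have inj_image: "inj_on ((`) f) P"
    using inj_on_image_Pow[OF assms] by (rule inj_on_subset) auto
  have "inj_on ((`) ((`) f)) (down_sets P)"
    using inj_on_image_Pow[OF inj_image] by (rule inj_on_subset) (auto simp: down_sets_def)
  then show ?thesis
    unfolding down_sets_image[OF assms] by (rule card_image)
qed

definition levels_2_upto :: "nat set \<Rightarrow> nat \<Rightarrow> nat set set" where
  "levels_2_upto S m = {x. x \<subseteq> S \<and> 2 \<le> card x \<and> card x \<le> m}"

lemma B_lower_eq: "B_lower n = levels_2_upto {..<n} n"
proof -
  have "card x \<le> n" if "x \<subseteq> {..<n}" for x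
    using card_mono[OF _ that] by simp
  then show ?thesis
    unfolding B_lower_def level_def boolean_lattice_def levels_2_upto_def by auto
qed

lemma B_lower_upper_eq: "B_lower_upper n = levels_2_upto {..<n} (n - 2)"
  unfolding B_lower_upper_def level_def boolean_lattice_def levels_2_upto_def by auto

lemma levels_2_upto_image:
  assumes "bij_betw f A S"
  shows "(`) f ` levels_2_upto A m = levels_2_upto S m"
proof -
  have "card (f ` x) = card x" if "x \<subseteq> A" for x
    using assms that by (meson bij_betw_def card_image inj_on_subset)
  moreover have "x \<subseteq> S \<longleftrightarrow> (\<exists>y \<subseteq> A. x = f ` y)" for x
    using assms by (auto simp: bij_betw_def subset_image_iff)
  ultimately show ?thesis
    unfolding levels_2_upto_def by auto
qed

lemma card_down_sets_levels_2_upto: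
  assumes "finite S"
  shows "card (down_sets (levels_2_upto S m)) = num_down_sets (levels_2_upto {..<card S} m)"
proof -
  obtain f where f: "bij_betw f {..<card S} S"
    using ex_bij_betw_nat_finite[OF assms] by (auto simp: atLeast0LessThan)
  then have "inj_on f (\<Union>(levels_2_upto {..<card S} m))"
    unfolding bij_betw_def levels_2_upto_def by (auto intro: inj_on_subset)
  then show ?thesis
    unfolding num_down_sets_def levels_2_upto_image[OF f, symmetric]
    by (rule card_down_sets_image)
qed

definition atoms :: "nat set set \<Rightarrow> nat set" where
  "atoms D = {i. {i} \<in> D}"

definition full_down_sets :: "nat set \<Rightarrow> nat set set set" where
  "full_down_sets S = {D \<in> down_sets (Pow S). atoms D = S}"

lemma down_set_subset_Pow_atoms:
  assumes "D \<in> down_sets (Pow N)"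
  shows "D \<subseteq> Pow (atoms D)"
proof
  fix x assume x: "x \<in> D"
  have "{i} \<in> D" if "i \<in> x" for i
    by (rule down_setsD[OF assms x]) (use down_sets_subset[OF assms] x that in auto)
  then show "x \<in> Pow (atoms D)"
    by (auto simp: atoms_def)
qed

lemma full_down_sets_iff:
  assumes "D \<in> down_sets (Pow N)"
  shows "D \<in> full_down_sets N \<longleftrightarrow> (\<forall>j\<in>N. {j} \<in> D)"
  using down_sets_subset[OF assms] assms by (auto simp: full_down_sets_def atoms_def)

lemma down_sets_Pow_iff:
  assumes "D \<subseteq> Pow S" and "S \<subseteq> N"
  shows "D \<in> down_sets (Pow N) \<longleftrightarrow> D \<in> down_sets (Pow S)"
proof
  assume D: "D \<in> down_sets (Pow N)"
  show "D \<in> down_sets (Pow S)"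
  proof (rule down_setsI)
    show "D \<subseteq> Pow S"
      using assms(1) .
    show "y \<in> D" if "x \<in> D" "y \<in> Pow S" "y \<subseteq> x" for x y
      using down_setsD[OF D that(1)] that(2,3) assms(2) by blast
  qed
next
  assume D: "D \<in> down_sets (Pow S)"
  show "D \<in> down_sets (Pow N)"
  proof (rule down_setsI)
    show "D \<subseteq> Pow N"
      using assms by blast
    show "y \<in> D" if "x \<in> D" "y \<in> Pow N" "y \<subseteq> x" for x y
      using down_setsD[OF D that(1)] that(1,3) assms(1) by blast
  qed
qed

lemma down_sets_Pow_with_atoms:
  assumes "S \<subseteq> N"
  shows "{D \<in> down_sets (Pow N). atoms D = S} = full_down_sets S"
proof -
  have "D \<in> down_sets (Pow N) \<longleftrightarrow> D \<in> down_sets (Pow S)" if "atoms D = S" for D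
    using down_set_subset_Pow_atoms[of D] down_sets_Pow_iff[of D S N] that assms by auto
  then show ?thesis
    unfolding full_down_sets_def by blast
qed

definition levels_below_2 :: "nat set \<Rightarrow> nat set set" where
  "levels_below_2 S = {x. x \<subseteq> S \<and> card x < 2}"

lemma card_less_2_cases:
  assumes "finite x" and "card x < 2"
  obtains "x = {}" | i where "x = {i}"
  using assms by (cases "card x") (auto simp: card_Suc_eq)

lemma full_down_set_eq_Un:
  assumes "finite S" and "S \<noteq> {}" and D: "D \<in> full_down_sets S" and "\<forall>x\<in>D. card x \<le> m"
  shows "D = levels_below_2 S \<union> (D \<inter> levels_2_upto S m)"
proof -
  have DS: "D \<in> down_sets (Pow S)" and atoms: "atoms D = S"
    using D by (auto simp: full_down_sets_def)
  have "x \<in> D" if x: "x \<in> levels_below_2 S" for x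
  proof -
    have "x \<subseteq> S" "card x < 2"
      using x by (auto simp: levels_below_2_def)
    have "finite x"
      using \<open>x \<subseteq> S\<close> \<open>finite S\<close> by (rule finite_subset)
    obtain i where "{i} \<in> D"
      using \<open>S \<noteq> {}\<close> atoms by (auto simp: atoms_def)
    from \<open>finite x\<close> \<open>card x < 2\<close> show "x \<in> D"
    proof (cases rule: card_less_2_cases)
      case 1
      then show ?thesis
        using down_setsD[OF DS \<open>{i} \<in> D\<close>, of "{}"] by simp
    next
      case 2
      then show ?thesis
        using \<open>x \<subseteq> S\<close> atoms by (auto simp: atoms_def)
    qed
  qed
  moreover have "D \<subseteq> levels_below_2 S \<union> levels_2_upto S m"
    using down_sets_subset[OF DS] assms(4)
    by (auto simp: levels_below_2_def levels_2_upto_def)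
  ultimately show ?thesis
    by blast
qed

lemma levels_below_2_Un_down_set:
  assumes "finite S" and "1 \<le> m" and E: "E \<in> down_sets (levels_2_upto S m)"
  shows "levels_below_2 S \<union> E \<in> full_down_sets S"
    and "\<forall>x \<in> levels_below_2 S \<union> E. card x \<le> m"
proof -
  have E_sub: "E \<subseteq> levels_2_upto S m"
    using down_sets_subset[OF E] .
  have sub: "levels_below_2 S \<union> E \<subseteq> Pow S"
    using E_sub by (auto simp: levels_below_2_def levels_2_upto_def)
  have "y \<in> levels_below_2 S \<union> E"
    if x: "x \<in> levels_below_2 S \<union> E" and y: "y \<in> Pow S" "y \<subseteq> x" for x y
  proof (cases "card y < 2")
    case True
    then show ?thesis
      using y(1) by (simp add: levels_below_2_def)
  next
    case False
    have "x \<subseteq> S"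
      using x sub by (auto simp: levels_below_2_def levels_2_upto_def)
    then have "card y \<le> card x"
      using y(2) \<open>finite S\<close> by (meson card_mono finite_subset)
    then have "x \<in> E"
      using x False by (auto simp: levels_below_2_def)
    moreover have "y \<in> levels_2_upto S m"
      using \<open>x \<in> E\<close> E_sub False \<open>card y \<le> card x\<close> y(1)
      by (auto simp: levels_2_upto_def)
    ultimately show ?thesis
      using down_setsD[OF E] y(2) by blast
  qed
  then have "levels_below_2 S \<union> E \<in> down_sets (Pow S)"
    by (rule down_setsI[OF sub])
  moreover have "atoms (levels_below_2 S \<union> E) = S"
    using E_sub by (auto simp: atoms_def levels_below_2_def levels_2_upto_def)
  ultimately show "levels_below_2 S \<union> E \<in> full_down_sets S"
    unfolding full_down_sets_def by blast
  show "\<forall>x \<in> levels_below_2 S \<union> E. card x \<le> m"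
    using E_sub \<open>1 \<le> m\<close> by (auto simp: levels_below_2_def levels_2_upto_def)
qed

lemma card_full_down_sets_bounded:
  assumes "finite S" and "S \<noteq> {}" and "1 \<le> m"
  shows "card {D \<in> full_down_sets S. \<forall>x\<in>D. card x \<le> m} = card (down_sets (levels_2_upto S m))"
proof (rule bij_betw_same_card[of "\<lambda>D. D \<inter> levels_2_upto S m"],
       rule bij_betw_byWitness[where f' = "\<lambda>E. levels_below_2 S \<union> E"])
  show "\<forall>D \<in> {D \<in> full_down_sets S. \<forall>x\<in>D. card x \<le> m}.
          levels_below_2 S \<union> (D \<inter> levels_2_upto S m) = D"
    using full_down_set_eq_Un[OF assms(1,2)] by blast
  show "\<forall>E \<in> down_sets (levels_2_upto S m). (levels_below_2 S \<union> E) \<inter> levels_2_upto S m = E"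
    by (auto simp: levels_below_2_def levels_2_upto_def dest: down_sets_subset)
  show "(\<lambda>D. D \<inter> levels_2_upto S m) ` {D \<in> full_down_sets S. \<forall>x\<in>D. card x \<le> m}
          \<subseteq> down_sets (levels_2_upto S m)"
    by (auto simp: full_down_sets_def levels_2_upto_def intro!: down_sets_Int)
  show "(\<lambda>E. levels_below_2 S \<union> E) ` down_sets (levels_2_upto S m)
          \<subseteq> {D \<in> full_down_sets S. \<forall>x\<in>D. card x \<le> m}"
    using levels_below_2_Un_down_set[OF assms(1,3)] by blast
qed

lemma card_full_down_sets:
  assumes "finite S"
  shows "card (full_down_sets S) = (if S = {} then 2 else b_lower (card S))"
proof (cases "S = {}")
  case True
  have "down_sets (Pow {}) = Pow {{}}"
  proof (intro equalityI subsetI)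
    show "D \<in> Pow {{}}" if "D \<in> down_sets (Pow {})" for D
      using down_sets_subset[OF that] by simp
    show "D \<in> down_sets (Pow {})" if "D \<in> Pow {{}}" for D
      using that by (intro down_setsI) auto
  qed
  moreover have "atoms D = {}" if "D \<subseteq> {{}}" for D
    using that by (auto simp: atoms_def)
  ultimately have "full_down_sets S = Pow {{}}"
    using True by (auto simp: full_down_sets_def)
  then show ?thesis
    using True by (simp add: card_Pow)
next
  case False
  have "card x \<le> card S" if "D \<in> full_down_sets S" "x \<in> D" for D x
    using that assms by (auto simp: full_down_sets_def intro: card_mono dest!: down_sets_subset)
  then have "full_down_sets S = {D \<in> full_down_sets S. \<forall>x\<in>D. card x \<le> card S}"
    by blast
  then have "card (full_down_sets S) = card {D \<in> full_down_sets S. \<forall>x\<in>D. card x \<le> card S}"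
    by (rule arg_cong)
  also have "\<dots> = card (down_sets (levels_2_upto S (card S)))"
    using False assms by (intro card_full_down_sets_bounded) (auto simp: Suc_le_eq card_gt_0_iff)
  also have "\<dots> = b_lower (card S)"
    using card_down_sets_levels_2_upto[OF assms] by (simp add: b_lower_def B_lower_eq)
  finally show ?thesis
    using False by simp
qed

lemma card_down_sets_Pow:
  assumes "finite N"
  shows "card (down_sets (Pow N)) = (\<Sum>S\<in>Pow N. card (full_down_sets S))"
proof -
  have atoms_sub: "atoms D \<subseteq> N" if "D \<in> down_sets (Pow N)" for D
    using down_sets_subset[OF that] by (auto simp: atoms_def)
  have "down_sets (Pow N) = (\<Union>S\<in>Pow N. {D \<in> down_sets (Pow N). atoms D = S})"
  proof (intro equalityI subsetI)
    fix D assume "D \<in> down_sets (Pow N)"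
    then show "D \<in> (\<Union>S\<in>Pow N. {D \<in> down_sets (Pow N). atoms D = S})"
      using atoms_sub by blast
  qed auto
  moreover have "finite (down_sets (Pow N))"
    using assms by (simp add: finite_down_sets)
  ultimately have "card (down_sets (Pow N)) = (\<Sum>S\<in>Pow N. card {D \<in> down_sets (Pow N). atoms D = S})"
    using assms by (subst card_UN_disjoint[symmetric]) auto
  also have "\<dots> = (\<Sum>S\<in>Pow N. card (full_down_sets S))"
    by (intro sum.cong) (auto simp: down_sets_Pow_with_atoms)
  finally show ?thesis .
qed

lemma sum_Pow_card:
  fixes f :: "nat \<Rightarrow> 'a::comm_semiring_1"
  assumes "finite N"
  shows "(\<Sum>S\<in>Pow N. f (card S)) = (\<Sum>k\<le>card N. of_nat (card N choose k) * f k)"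
proof -
  have "(\<Sum>S\<in>Pow N. f (card S)) = (\<Sum>k\<le>card N. \<Sum>S\<in>{S \<in> Pow N. card S = k}. f (card S))"
    using assms by (intro sum.group[symmetric]) (auto intro: card_mono)
  also have "\<dots> = (\<Sum>k\<le>card N. of_nat (card {S. S \<subseteq> N \<and> card S = k}) * f k)"
    by (intro sum.cong) auto
  also have "\<dots> = (\<Sum>k\<le>card N. of_nat (card N choose k) * f k)"
    using n_subsets[OF assms] by simp
  finally show ?thesis .
qed

lemma b_lower_1: "b_lower 1 = 1"
proof -
  have "B_lower 1 = {}"
    by (simp add: B_lower_def)
  moreover have "down_sets {} = {{}}"
    by (auto simp: down_sets_def)
  ultimately show ?thesis
    by (simp add: b_lower_def num_down_sets_def)
qed

lemma level_top: "level n n = {{..<n}}"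
  using card_seteq[of "{..<n}"] by (auto simp: level_def boolean_lattice_def)

lemma b_lower_2: "b_lower 2 = 2"
proof -
  have "B_lower 2 = {{..<2}}"
    by (simp add: B_lower_def level_top)
  moreover have "down_sets {X} = Pow {X}" for X
    by (auto simp: down_sets_def)
  ultimately show ?thesis
    by (simp add: b_lower_def num_down_sets_def card_Pow)
qed

lemma b_eq_sum_b_lower:
  assumes "1 \<le> n"
  shows "b n = 2 + n + (\<Sum>k=2..n. (n choose k) * b_lower k)"
proof -
  have "b n = (\<Sum>S\<in>Pow {..<n}. if card S = 0 then 2 else b_lower (card S))"
    unfolding b_def num_down_sets_def boolean_lattice_def card_down_sets_Pow[OF finite_lessThan]
    by (intro sum.cong) (auto simp: card_full_down_sets finite_subset)
  also have "\<dots> = (\<Sum>k\<le>n. (n choose k) * (if k = 0 then 2 else b_lower k))"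
    using sum_Pow_card[of "{..<n}" "\<lambda>k. if k = 0 then 2 else b_lower k"] by simp
  also have "{..n} = insert 0 (insert 1 {2..n})"
    using assms by auto
  finally show ?thesis
    using b_lower_1 by simp
qed

definition dual_down_set :: "nat set \<Rightarrow> nat set set \<Rightarrow> nat set set" where
  "dual_down_set N D = (\<lambda>x. N - x) ` (Pow N - D)"

lemma dual_down_set_subset: "dual_down_set N D \<subseteq> Pow N"
  unfolding dual_down_set_def by auto

lemma mem_dual_down_set:
  assumes "y \<subseteq> N"
  shows "y \<in> dual_down_set N D \<longleftrightarrow> N - y \<notin> D"
proof -
  have "y = N - (N - y)"
    using assms by auto
  then show ?thesis
    unfolding dual_down_set_def by (auto simp: double_diff)
qed

lemma dual_dual_down_set:
  assumes "D \<subseteq> Pow N"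
  shows "dual_down_set N (dual_down_set N D) = D"
proof (intro equalityI subsetI)
  fix x assume x: "x \<in> dual_down_set N (dual_down_set N D)"
  then have "x \<subseteq> N"
    using dual_down_set_subset by blast
  then show "x \<in> D"
    using x by (simp add: mem_dual_down_set double_diff)
next
  fix x assume x: "x \<in> D"
  then have "x \<subseteq> N"
    using assms by blast
  then show "x \<in> dual_down_set N (dual_down_set N D)"
    using x by (simp add: mem_dual_down_set double_diff)
qed

lemma dual_down_set_in_down_sets:
  assumes D: "D \<in> down_sets (Pow N)"
  shows "dual_down_set N D \<in> down_sets (Pow N)"
proof (rule down_setsI[OF dual_down_set_subset])
  fix x y assume x: "x \<in> dual_down_set N D" and y: "y \<in> Pow N" "y \<subseteq> x"
  have "x \<subseteq> N"
    using x dual_down_set_subset by blast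
  then have "N - x \<notin> D"
    using x by (simp add: mem_dual_down_set)
  then have "N - y \<notin> D"
    using down_setsD[OF D, of "N - y" "N - x"] y(2) by blast
  then show "y \<in> dual_down_set N D"
    using y(1) by (simp add: mem_dual_down_set)
qed

lemma coatom_mem_dual_down_set:
  assumes "j \<in> N"
  shows "N - {j} \<in> dual_down_set N D \<longleftrightarrow> {j} \<notin> D"
  using assms by (simp add: mem_dual_down_set double_diff)

lemma card_down_sets_Pow_not_full:
  "card (down_sets (Pow N) - full_down_sets N) = card {D \<in> down_sets (Pow N). \<exists>j\<in>N. N - {j} \<in> D}"
proof (rule bij_betw_same_card[of "dual_down_set N"],
       rule bij_betw_byWitness[where f' = "dual_down_set N"])
  show "\<forall>D \<in> down_sets (Pow N) - full_down_sets N. dual_down_set N (dual_down_set N D) = D"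
    by (metis (no_types, lifting) DiffD1 mem_Collect_eq dual_dual_down_set down_sets_subset)
  show "\<forall>D \<in> {D \<in> down_sets (Pow N). \<exists>j\<in>N. N - {j} \<in> D}.
          dual_down_set N (dual_down_set N D) = D"
    by (metis (no_types, lifting) DiffD1 mem_Collect_eq dual_dual_down_set down_sets_subset)
  show "dual_down_set N ` (down_sets (Pow N) - full_down_sets N)
          \<subseteq> {D \<in> down_sets (Pow N). \<exists>j\<in>N. N - {j} \<in> D}"
  proof (rule image_subsetI)
    fix D assume D: "D \<in> down_sets (Pow N) - full_down_sets N"
    then obtain j where "j \<in> N" "{j} \<notin> D"
      by (auto simp: full_down_sets_iff)
    then show "dual_down_set N D \<in> {D \<in> down_sets (Pow N). \<exists>j\<in>N. N - {j} \<in> D}"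
      using dual_down_set_in_down_sets D coatom_mem_dual_down_set by blast
  qed
  show "dual_down_set N ` {D \<in> down_sets (Pow N). \<exists>j\<in>N. N - {j} \<in> D}
          \<subseteq> down_sets (Pow N) - full_down_sets N"
  proof (rule image_subsetI)
    fix D assume "D \<in> {D \<in> down_sets (Pow N). \<exists>j\<in>N. N - {j} \<in> D}"
    then obtain j where D: "D \<in> down_sets (Pow N)" and j: "j \<in> N" "N - {j} \<in> D"
      by blast
    have "D = dual_down_set N (dual_down_set N D)"
      using dual_dual_down_set[OF down_sets_subset[OF D]] ..
    then have "{j} \<notin> dual_down_set N D"
      using coatom_mem_dual_down_set[OF j(1)] j(2) by blast
    then show "dual_down_set N D \<in> down_sets (Pow N) - full_down_sets N"
      using j(1) dual_down_set_in_down_sets[OF D] by (auto simp: full_down_sets_iff)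
  qed
qed

lemma coatom_subset_if_card_ge:
  assumes "finite N" and "N \<noteq> {}" and "x \<subseteq> N" and "card N - 1 \<le> card x"
  obtains j where "j \<in> N" and "N - {j} \<subseteq> x"
proof (cases "N - x = {}")
  case True
  then show ?thesis
    using that \<open>N \<noteq> {}\<close> by blast
next
  case False
  have "card (N - x) \<le> 1"
    using assms by (simp add: card_Diff_subset finite_subset)
  then obtain j where "N - x = {j}"
    using False assms(1) by (metis card_0_eq card_1_singletonE finite_Diff le_neq_implies_less less_one)
  then show ?thesis
    using that by blast
qed

lemma full_down_sets_without_coatoms:
  assumes "finite N" and "2 \<le> card N"
  shows "{D \<in> full_down_sets N. \<forall>j\<in>N. N - {j} \<notin> D}
       = {D \<in> full_down_sets N. \<forall>x\<in>D. card x \<le> card N - 2}"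
proof (intro Collect_cong conj_cong refl)
  fix D assume "D \<in> full_down_sets N"
  then have D: "D \<in> down_sets (Pow N)"
    by (simp add: full_down_sets_def)
  show "(\<forall>j\<in>N. N - {j} \<notin> D) \<longleftrightarrow> (\<forall>x\<in>D. card x \<le> card N - 2)"
  proof
    assume no_coatom: "\<forall>j\<in>N. N - {j} \<notin> D"
    show "\<forall>x\<in>D. card x \<le> card N - 2"
    proof (rule ballI, rule ccontr)
      fix x assume "x \<in> D" and "\<not> card x \<le> card N - 2"
      then have "card N - 1 \<le> card x"
        by linarith
      moreover have "x \<subseteq> N"
        using \<open>x \<in> D\<close> down_sets_subset[OF D] by blast
      moreover have "N \<noteq> {}"
        using assms(2) by auto
      ultimately obtain j where "j \<in> N" "N - {j} \<subseteq> x"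
        using coatom_subset_if_card_ge[OF assms(1)] by blast
      then show False
        using no_coatom down_setsD[OF D \<open>x \<in> D\<close>, of "N - {j}"] by blast
    qed
  next
    assume small: "\<forall>x\<in>D. card x \<le> card N - 2"
    show "\<forall>j\<in>N. N - {j} \<notin> D"
    proof (intro ballI notI)
      fix j assume "j \<in> N" "N - {j} \<in> D"
      then have "card N - 1 \<le> card N - 2"
        using small assms(1) by fastforce
      then show False
        using assms(2) by linarith
    qed
  qed
qed

lemma down_sets_with_coatom_not_full:
  "{D \<in> down_sets (Pow N). \<exists>j\<in>N. N - {j} \<in> D} - full_down_sets N = (\<lambda>j. Pow (N - {j})) ` N"
proof (intro equalityI subsetI)
  fix D assume "D \<in> {D \<in> down_sets (Pow N). \<exists>j\<in>N. N - {j} \<in> D} - full_down_sets N"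
  then obtain i j where D: "D \<in> down_sets (Pow N)" and j: "j \<in> N" "N - {j} \<in> D"
    and i: "i \<in> N" "{i} \<notin> D"
    by (auto simp: full_down_sets_iff)
  have "i = j"
    using down_setsD[OF D j(2), of "{i}"] i by blast
  have "D \<subseteq> Pow (N - {j})"
    using down_sets_subset[OF D] down_setsD[OF D, of _ "{j}"] i \<open>i = j\<close> by blast
  moreover have "Pow (N - {j}) \<subseteq> D"
    using down_setsD[OF D j(2)] by blast
  ultimately show "D \<in> (\<lambda>j. Pow (N - {j})) ` N"
    using j(1) by blast
next
  fix D assume "D \<in> (\<lambda>j. Pow (N - {j})) ` N"
  then obtain j where j: "j \<in> N" and D: "D = Pow (N - {j})"
    by blast
  have "D \<in> down_sets (Pow N)"
    unfolding D by (rule down_setsI) auto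
  then show "D \<in> {D \<in> down_sets (Pow N). \<exists>j\<in>N. N - {j} \<in> D} - full_down_sets N"
    using j D by (auto simp: full_down_sets_iff)
qed

lemma card_down_sets_with_coatom_not_full:
  "card ({D \<in> down_sets (Pow N). \<exists>j\<in>N. N - {j} \<in> D} - full_down_sets N) = card N"
proof -
  have "inj_on (\<lambda>j. Pow (N - {j})) N"
    by (rule inj_onI) blast
  then show ?thesis
    by (simp add: down_sets_with_coatom_not_full card_image)
qed

lemma b_plus_b_lower_upper:
  assumes "3 \<le> k"
  shows "b k + b_lower_upper k = 2 * b_lower k + k"
proof -
  define N where "N = {..<k}"
  define DS where "DS = down_sets (Pow N)"
  define A where "A = full_down_sets N"
  define C where "C = {D \<in> DS. \<exists>j\<in>N. N - {j} \<in> D}"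
  have N: "finite N" "card N = k" "N \<noteq> {}"
    using assms by (auto simp: N_def lessThan_empty_iff)
  have "finite DS"
    using N(1) unfolding DS_def by (simp add: finite_down_sets)
  have "A \<subseteq> DS" "C \<subseteq> DS"
    by (auto simp: A_def C_def DS_def full_down_sets_def)
  have "card DS = b k"
    by (simp add: DS_def N_def b_def num_down_sets_def boolean_lattice_def)
  moreover have "card A = b_lower k"
    using N by (simp add: A_def card_full_down_sets)
  moreover have "card (DS - A) = card C"
    unfolding DS_def A_def C_def by (rule card_down_sets_Pow_not_full)
  moreover have "card (A - C) = b_lower_upper k"
  proof -
    have "A - C = {D \<in> full_down_sets N. \<forall>x\<in>D. card x \<le> k - 2}"
      using full_down_sets_without_coatoms[of N] N assms
      by (auto simp: A_def C_def DS_def full_down_sets_def)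
    then show ?thesis
      using card_full_down_sets_bounded[OF N(1,3), of "k - 2"] card_down_sets_levels_2_upto[OF N(1)] N assms
      by (simp add: b_lower_upper_def B_lower_upper_eq N_def)
  qed
  moreover have "card (C - A) = k"
    using card_down_sets_with_coatom_not_full[of N] N by (simp add: A_def C_def DS_def)
  moreover have "card DS = card A + card (DS - A)"
    using card_Int_Diff[OF \<open>finite DS\<close>, of A] \<open>A \<subseteq> DS\<close> by (simp add: Int_absorb1 Int_absorb2)
  moreover have "card C = card (A \<inter> C) + card (C - A)" "card A = card (A \<inter> C) + card (A - C)"
    using card_Int_Diff[OF finite_subset[OF \<open>C \<subseteq> DS\<close> \<open>finite DS\<close>], of A]
      card_Int_Diff[OF finite_subset[OF \<open>A \<subseteq> DS\<close> \<open>finite DS\<close>], of C]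
    by (simp_all add: Int_commute)
  ultimately show ?thesis
    by linarith
qed

theorem theorem2:
  shows "(\<forall>n::nat. n \<ge> 3 \<longrightarrow>
            b n = 2 + n + (\<Sum>k=2..n. (n choose k) * b_lower k))
         \<and> b_lower 2 = 2
         \<and> (\<forall>k::nat. k \<ge> 3 \<longrightarrow>
            b_lower k = b_lower_upper k + 2 + (\<Sum>i=2..k-1. (k choose i) * b_lower i))"
proof (intro conjI allI impI)
  show "b n = 2 + n + (\<Sum>k=2..n. (n choose k) * b_lower k)" if "n \<ge> 3" for n
    using that by (intro b_eq_sum_b_lower) simp
  show "b_lower 2 = 2"
    by (rule b_lower_2)
next
  fix k :: nat assume "k \<ge> 3"
  then have "{2..k} = insert k {2..k-1}"
    by auto
  then have "b k = 2 + k + b_lower k + (\<Sum>i=2..k-1. (k choose i) * b_lower i)"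
    using b_eq_sum_b_lower[of k] \<open>k \<ge> 3\<close> by simp
  then show "b_lower k = b_lower_upper k + 2 + (\<Sum>i=2..k-1. (k choose i) * b_lower i)"
    using b_plus_b_lower_upper[OF \<open>k \<ge> 3\<close>] by linarith
qed

end
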